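(* Let $G$ be a finite group such that $|Z(G)|$ has at least two distinct prime divisors. Then the difference graph $\mathcal{D}(G)$ is connected if and only if $G$ is not isomorphic to $\mathbb{Z}_{pq}$ for primes $p,q$. Moreover, when $\mathcal{D}(G)$ is connected, its diameter is at most $6$.
   Context: For a finite group $G$ with identity $e$: the intersection power graph $\mathcal{G}_I(G)$ has vertex set $G$, two distinct non-identity vertices $x,y$ being adjacent iff $\langle x\rangle\cap\langle y\rangle\neq\{e\}$, and $e$ being adjacent to every other vertex. The power graph $\mathcal{P}(G)$ has vertex set $G$, two distinct vertices being adjacent iff one is a power of the other. The difference graph $\mathcal{D}(G)$ is the graph on vertex set $G$ with edge set $E(\mathcal{G}_I(G))\setminus E(\mathcal{P}(G))$, with all isolated vertices removed. $Z(G)$ denotes the center of $G$. *)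

theory Defs
  imports "HOL-Algebra.Algebra" "HOL-Computational_Algebra.Primes"
begin

definition grp_center :: "('a, 'b) monoid_scheme \<Rightarrow> 'a set" where
  "grp_center G = {z \<in> carrier G. \<forall>x \<in> carrier G. z \<otimes>\<^bsub>G\<^esub> x = x \<otimes>\<^bsub>G\<^esub> z}"

definition ipg_edge :: "('a, 'b) monoid_scheme \<Rightarrow> 'a \<Rightarrow> 'a \<Rightarrow> bool" where
  "ipg_edge G x y \<longleftrightarrow> x \<in> carrier G \<and> y \<in> carrier G \<and> x \<noteq> y \<and>
     (x = \<one>\<^bsub>G\<^esub> \<or> y = \<one>\<^bsub>G\<^esub> \<or>
      generate G {x} \<inter> generate G {y} \<noteq> {\<one>\<^bsub>G\<^esub>})"

definition pg_edge :: "('a, 'b) monoid_scheme \<Rightarrow> 'a \<Rightarrow> 'a \<Rightarrow> bool" where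
  "pg_edge G x y \<longleftrightarrow> x \<in> carrier G \<and> y \<in> carrier G \<and> x \<noteq> y \<and>
     ((\<exists>k::int. y = x [^]\<^bsub>G\<^esub> k) \<or> (\<exists>k::int. x = y [^]\<^bsub>G\<^esub> k))"

definition diff_edge :: "('a, 'b) monoid_scheme \<Rightarrow> 'a \<Rightarrow> 'a \<Rightarrow> bool" where
  "diff_edge G x y \<longleftrightarrow> ipg_edge G x y \<and> \<not> pg_edge G x y"

definition diff_vertices :: "('a, 'b) monoid_scheme \<Rightarrow> 'a set" where
  "diff_vertices G = {x \<in> carrier G. \<exists>y. diff_edge G x y}"

text \<open>Walks in a graph given by an edge relation: a list of vertices, consecutive
  ones adjacent.  A walk from u to v of length n (n edges).\<close>
definition is_walk :: "('a \<Rightarrow> 'a \<Rightarrow> bool) \<Rightarrow> 'a list \<Rightarrow> 'a \<Rightarrow> 'a \<Rightarrow> bool" where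
  "is_walk E xs u v \<longleftrightarrow> xs \<noteq> [] \<and> hd xs = u \<and> last xs = v \<and>
     (\<forall>i. Suc i < length xs \<longrightarrow> E (xs ! i) (xs ! Suc i))"

definition graph_connected :: "'a set \<Rightarrow> ('a \<Rightarrow> 'a \<Rightarrow> bool) \<Rightarrow> bool" where
  "graph_connected V E \<longleftrightarrow> V \<noteq> {} \<and> (\<forall>u\<in>V. \<forall>v\<in>V. \<exists>xs. is_walk E xs u v)"

definition graph_diam_le :: "'a set \<Rightarrow> ('a \<Rightarrow> 'a \<Rightarrow> bool) \<Rightarrow> nat \<Rightarrow> bool" where
  "graph_diam_le V E d \<longleftrightarrow>
     (\<forall>u\<in>V. \<forall>v\<in>V. \<exists>xs. is_walk E xs u v \<and> length xs \<le> Suc d)"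

end

theory Submission
  imports Defs "HOL-Algebra.Multiplicative_Group"
begin

(*
  Choose central elements a, b of the distinct prime orders p, q (Cauchy's theorem in Z(G)) and
  put h = ab.  Then <h> is cyclic of order pq, every non-trivial subgroup of <h> contains a or b,
  and a vertex w outside <h> is adjacent to h in D(G) iff <w> contains exactly one of a and b.
  Every vertex x of D(G) reaches h in at most three steps: if <x> meets <h> trivially, go through
  ua or ub for some u of prime order in <x>; otherwise a suitable power of x or of a neighbour of
  x, cut down to its p-part or p'-part, separates a from b.  Hence the diameter is at most 6, and
  D(G) is non-empty as soon as G <> <h>.  If G = <h> then G is cyclic of order pq; conversely in a
  group of order rs (r, s prime) cyclic subgroups meeting non-trivially are nested, so D(G) has
  no edges.
*)

hide_const (open) Divisibility.prime

section \<open>Walks of bounded length\<close>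

lemma is_walk_Cons_Cons:
  "is_walk E (x # y # zs) u v \<longleftrightarrow> x = u \<and> E x y \<and> is_walk E (y # zs) y v"
  unfolding is_walk_def by (auto simp: All_less_Suc2)

definition reachable_within :: "('a \<Rightarrow> 'a \<Rightarrow> bool) \<Rightarrow> nat \<Rightarrow> 'a \<Rightarrow> 'a \<Rightarrow> bool" where
  "reachable_within E n u v \<longleftrightarrow> (\<exists>xs. is_walk E xs u v \<and> length xs \<le> Suc n)"

lemma graph_diam_le_iff_reachable_within:
  "graph_diam_le V E d \<longleftrightarrow> (\<forall>u\<in>V. \<forall>v\<in>V. reachable_within E d u v)"
  unfolding graph_diam_le_def reachable_within_def ..

lemma reachable_within_refl: "reachable_within E n u u"
  unfolding reachable_within_def is_walk_def by (rule exI[of _ "[u]"]) simp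

lemma reachable_within_Cons:
  assumes "E u v" and "reachable_within E n v w"
  shows "reachable_within E (Suc n) u w"
proof -
  obtain xs where xs: "is_walk E xs v w" "length xs \<le> Suc n"
    using assms(2) unfolding reachable_within_def by blast
  then obtain ys where "xs = v # ys" unfolding is_walk_def by (cases xs) auto
  then have "is_walk E (u # xs) u w" using xs(1) assms(1) by (simp add: is_walk_Cons_Cons)
  then show ?thesis using xs(2) unfolding reachable_within_def by fastforce
qed

lemma reachable_within_edge: "E u v \<Longrightarrow> reachable_within E (Suc n) u v"
  using reachable_within_Cons[OF _ reachable_within_refl] .

lemma reachable_within_mono:
  "reachable_within E m u v \<Longrightarrow> m \<le> n \<Longrightarrow> reachable_within E n u v"
  unfolding reachable_within_def by fastforce

lemma is_walk_reachable_within_trans: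
  "is_walk E xs u v \<Longrightarrow> reachable_within E n v w \<Longrightarrow> reachable_within E (length xs - 1 + n) u w"
proof (induction xs arbitrary: u rule: induct_list012)
  case (2 x)
  then show ?case unfolding is_walk_def by auto
next
  case (3 x y zs)
  then show ?case by (auto simp: is_walk_Cons_Cons intro: reachable_within_Cons)
qed (simp add: is_walk_def)

lemma reachable_within_trans:
  assumes "reachable_within E m u v" and "reachable_within E n v w"
  shows "reachable_within E (m + n) u w"
proof -
  obtain xs where "is_walk E xs u v" "length xs \<le> Suc m"
    using assms(1) unfolding reachable_within_def by blast
  then show ?thesis
    using is_walk_reachable_within_trans[OF _ assms(2)] reachable_within_mono by fastforce
qed

lemma reachable_within_sym:
  assumes sym: "\<And>x y. E x y \<Longrightarrow> E y x" and "reachable_within E n u v"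
  shows "reachable_within E n v u"
proof -
  have "is_walk E xs u v \<Longrightarrow> reachable_within E (length xs - 1) v u" for xs
  proof (induction xs arbitrary: u rule: induct_list012)
    case (3 x y zs)
    then have "reachable_within E (length zs) v y" "reachable_within E 1 y u"
      using sym reachable_within_Cons[OF _ reachable_within_refl, of E y u 0]
      by (auto simp: is_walk_Cons_Cons)
    then show ?case using reachable_within_trans by fastforce
  qed (auto simp: is_walk_def reachable_within_refl)
  moreover obtain xs where "is_walk E xs u v" "length xs \<le> Suc n"
    using assms(2) unfolding reachable_within_def by blast
  ultimately show ?thesis using reachable_within_mono by fastforce
qed

lemma graph_connected_iff_nonempty:
  "graph_diam_le V E d \<Longrightarrow> graph_connected V E \<longleftrightarrow> V \<noteq> {}"
  unfolding graph_connected_def graph_diam_le_def by blast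

section \<open>Cyclic subgroups and element orders\<close>

lemma dvd_prime_mult_prime:
  fixes d r s :: nat
  assumes "prime r" "prime s" "d dvd r * s"
  shows "d = 1 \<or> prime d \<or> d = r * s"
proof (cases "r dvd d")
  case True
  then obtain d' where d: "d = r * d'" by blast
  then have "d' dvd s" using assms(1,3) by (simp add: nat_mult_dvd_cancel_disj)
  then have "d' = 1 \<or> d' = s" using assms(2) prime_nat_iff by blast
  then show ?thesis using d assms(1) by auto
next
  case False
  then have "d dvd s"
    using assms prime_imp_coprime coprime_commute coprime_dvd_mult_right_iff by blast
  then have "d = 1 \<or> d = s" using assms(2) prime_nat_iff by blast
  then show ?thesis using assms(2) by auto
qed

context group
begin

abbreviation cyc :: "'a \<Rightarrow> 'a set" where "cyc x \<equiv> generate G {x}"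

lemma cyc_iff_int_pow: "x \<in> carrier G \<Longrightarrow> y \<in> cyc x \<longleftrightarrow> (\<exists>k::int. y = x [^] k)"
  using generate_pow by auto

lemma int_pow_in_cyc: "x \<in> carrier G \<Longrightarrow> x [^] (k::int) \<in> cyc x"
  using cyc_iff_int_pow by blast

lemma self_in_cyc: "x \<in> carrier G \<Longrightarrow> x \<in> cyc x"
  by (rule generate.incl) simp

lemma one_in_cyc: "\<one> \<in> cyc x"
  by (rule generate.one)

lemma cyc_subgroup: "x \<in> carrier G \<Longrightarrow> subgroup (cyc x) G"
  by (simp add: generate_is_subgroup)

lemma cyc_subset_carrier: "x \<in> carrier G \<Longrightarrow> cyc x \<subseteq> carrier G"
  using cyc_iff_int_pow by auto

lemma cyc_mono: "x \<in> carrier G \<Longrightarrow> y \<in> cyc x \<Longrightarrow> cyc y \<subseteq> cyc x"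
  using generate_subgroup_incl cyc_subgroup by blast

lemma pow_eq_one_coprime:
  assumes "c \<in> carrier G" "c [^] (m::int) = \<one>" "c [^] (n::int) = \<one>" "coprime m n"
  shows "c = \<one>"
proof -
  have "int (ord c) dvd m" "int (ord c) dvd n" using assms int_pow_eq_id by auto
  then have "ord c = 1" using assms(4) coprime_common_divisor by fastforce
  then show ?thesis using ord_eq_1 assms(1) by blast
qed

lemma pow_eq_one_if_in_cyc:
  assumes "z \<in> carrier G" "z [^] (m::int) = \<one>" "c \<in> cyc z"
  shows "c [^] m = \<one>"
proof -
  obtain k :: int where "c = z [^] k" using cyc_iff_int_pow assms by blast
  then have "c [^] m = (z [^] m) [^] k" using assms(1) by (simp add: int_pow_pow mult.commute)
  then show ?thesis using assms(2) by simp
qed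

lemma not_in_cyc_if_coprime:
  assumes "c \<in> carrier G" "d \<in> carrier G" "d \<noteq> \<one>"
    and "c [^] (m::int) = \<one>" "d [^] (n::int) = \<one>" "coprime m n"
  shows "d \<notin> cyc c"
  using pow_eq_one_if_in_cyc pow_eq_one_coprime assms by blast

lemma in_cyc_int_pow_coprime:
  assumes "g \<in> carrier G" "c \<in> cyc g" "c [^] (n::int) = \<one>" "coprime m n"
  shows "c \<in> cyc (g [^] m)"
proof -
  obtain j :: int where j: "c = g [^] j" using cyc_iff_int_pow assms by blast
  obtain u v :: int where uv: "u * m + v * n = 1"
    using bezout_int assms(4) by (metis coprime_iff_gcd_eq_1)
  have c: "c \<in> carrier G" using j assms(1) by simp
  have "c = c [^] (m * u + n * v)" using uv c by (simp add: mult.commute)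
  also have "\<dots> = c [^] (m * u) \<otimes> (c [^] n) [^] v" using c by (simp add: int_pow_mult int_pow_pow)
  also have "\<dots> = (g [^] m) [^] (j * u)" using j assms(1,3) by (simp add: int_pow_pow mult_ac)
  finally show ?thesis using int_pow_in_cyc assms(1) by simp
qed

lemma in_cyc_int_pow_prime:
  assumes "g \<in> carrier G" "prime r" "g [^] int r = \<one>" "g [^] (k::int) \<noteq> \<one>"
  shows "g \<in> cyc (g [^] k)"
proof -
  have "\<not> int r dvd k"
    using assms(1,3,4) int_pow_eq_id by (metis dvd_trans)
  then have "coprime k (int r)"
    using assms(2) prime_imp_coprime coprime_commute by (metis prime_nat_int_transfer)
  then show ?thesis using in_cyc_int_pow_coprime self_in_cyc assms(1,3) by blast
qed

lemma in_cyc_mult_commute_coprime: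
  assumes "u \<in> carrier G" "c \<in> carrier G" "u \<otimes> c = c \<otimes> u"
    and "u [^] (m::int) = \<one>" "c [^] (n::int) = \<one>" "coprime m n"
  shows "u \<in> cyc (u \<otimes> c)" "c \<in> cyc (u \<otimes> c)"
proof -
  have uc: "u \<otimes> c \<in> carrier G" using assms by simp
  have pow: "(u \<otimes> c) [^] k = u [^] k \<otimes> c [^] k" for k :: int
    by (rule int_pow_mult_distrib[OF assms(3,1,2)])
  have sub: "cyc ((u \<otimes> c) [^] k) \<subseteq> cyc (u \<otimes> c)" for k :: int
    using cyc_mono[OF uc int_pow_in_cyc[OF uc]] .
  have "u \<in> cyc (u [^] n)"
    using in_cyc_int_pow_coprime[OF assms(1) self_in_cyc[OF assms(1)] assms(4), of n] assms(6)
    by (simp add: coprime_commute)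
  then show "u \<in> cyc (u \<otimes> c)" using sub[of n] pow[of n] assms(1,5) by auto
  have "c \<in> cyc (c [^] m)"
    using in_cyc_int_pow_coprime[OF assms(2) self_in_cyc[OF assms(2)] assms(5) assms(6)] .
  then show "c \<in> cyc (u \<otimes> c)" using sub[of m] pow[of m] assms(2,4) by auto
qed

lemma exists_prime_ord_in_cyc:
  assumes "finite (carrier G)" "x \<in> carrier G" "x \<noteq> \<one>"
  shows "\<exists>u \<in> cyc x. prime (ord u)"
proof -
  have "ord x \<noteq> 1" using assms(2,3) ord_eq_1 by blast
  then obtain r where r: "prime r" "r dvd ord x" using prime_factor_nat by blast
  then obtain m where m: "ord x = r * m" by blast
  have "m \<noteq> 0" using m ord_ge_1[OF assms(1,2)] by auto
  then have "ord (x [^] m) = r" using ord_pow[OF assms(2), of m] m r(1) by (simp add: prime_gt_0_nat)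
  moreover have "x [^] m \<in> cyc x" using int_pow_in_cyc[OF assms(2), of "int m"] by (simp add: int_pow_int)
  ultimately show ?thesis using r(1) by metis
qed

lemma card_subgroup_dvd_card:
  assumes "subgroup K G" "subgroup H G" "K \<subseteq> H"
  shows "card K dvd card H"
proof -
  interpret H: group "G\<lparr>carrier := H\<rparr>" using subgroup_imp_group[OF assms(2)] .
  have "card (rcosets\<^bsub>G\<lparr>carrier := H\<rparr>\<^esub> K) * card K = card H"
    using H.lagrange subgroup_incl[OF assms] unfolding order_def by simp
  then show ?thesis by (metis dvd_triv_right)
qed

lemma subgroups_nested_in_prime_prime_card:
  assumes H: "subgroup H G" "card H = r * s" "prime r" "prime s"
    and K: "subgroup K G" "K \<subseteq> H" and L: "subgroup L G" "L \<subseteq> H"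
    and KL: "K \<inter> L \<noteq> {\<one>}"
  shows "K \<subseteq> L \<or> L \<subseteq> K"
proof -
  have "finite H" using H(2-4) by (metis card.infinite mult_is_0 not_prime_0)
  then have fin: "finite K" using K(2) finite_subset by auto
  have KL_sub: "subgroup (K \<inter> L) G" using subgroups_Inter_pair K(1) L(1) by blast
  have "card (K \<inter> L) \<noteq> 1"
  proof
    assume "card (K \<inter> L) = 1"
    then obtain x where "K \<inter> L = {x}" by (rule card_1_singletonE)
    then show False using KL subgroup.one_closed[OF KL_sub] by auto
  qed
  then have "card K \<noteq> 1"
    using card_subgroup_dvd_card[OF KL_sub K(1)] by auto
  then consider "card K = r * s" | "prime (card K)"
    using dvd_prime_mult_prime[OF H(3,4) card_subgroup_dvd_card[OF K(1) H(1) K(2), unfolded H(2)]]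
    by blast
  then show ?thesis
  proof cases
    case 1
    then have "K = H" using card_subset_eq[OF _ K(2)] \<open>finite H\<close> H(2) by simp
    then show ?thesis using L(2) by blast
  next
    case 2
    then have "card (K \<inter> L) = card K"
      using card_subgroup_dvd_card[OF KL_sub K(1)] \<open>card (K \<inter> L) \<noteq> 1\<close> prime_nat_iff by blast
    then show ?thesis using card_subset_eq[OF fin] by blast
  qed
qed

lemma exists_ord_prime_in_subgroup:
  assumes "finite (carrier G)" "subgroup K G" "prime p" "p dvd card K"
  shows "\<exists>x \<in> K. ord x = p"
proof -
  interpret K: group "G\<lparr>carrier := K\<rparr>" using subgroup_imp_group[OF assms(2)] .
  obtain m where ord: "order (G\<lparr>carrier := K\<rparr>) = p ^ 1 * m"
    using assms(4) unfolding order_def by auto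
  have "finite (carrier (G\<lparr>carrier := K\<rparr>))"
    using finite_subset[OF subgroup.subset[OF assms(2)] assms(1)] by simp
  then have "\<exists>H. subgroup H (G\<lparr>carrier := K\<rparr>) \<and> card H = p ^ 1"
    by (rule sylow_thm[OF assms(3) K.is_group ord])
  then obtain H where H: "subgroup H (G\<lparr>carrier := K\<rparr>)" "card H = p" by auto
  have HG: "subgroup H G" using incl_subgroup[OF assms(2) H(1)] .
  have "H \<noteq> {\<one>}" using H(2) assms(3) by auto
  then obtain x where x: "x \<in> H" "x \<noteq> \<one>" using subgroup.one_closed[OF HG] by auto
  have xc: "x \<in> carrier G" using subgroup.mem_carrier[OF HG x(1)] .
  have "cyc x \<subseteq> H" using generate_subgroup_incl[OF _ HG] x(1) by simp
  then have "ord x dvd p"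
    using card_subgroup_dvd_card[OF cyc_subgroup[OF xc] HG] generate_pow_card[OF xc] H(2) by simp
  then have "ord x = p" using assms(3) x(2) ord_eq_1[OF xc] prime_nat_iff by blast
  moreover have "x \<in> K" using x(1) subgroup.subset[OF H(1)] by auto
  ultimately show ?thesis by blast
qed

lemma grp_center_subgroup: "subgroup (grp_center G) G"
proof (rule subgroupI)
  fix y z assume "y \<in> grp_center G" "z \<in> grp_center G"
  then have yz: "y \<in> carrier G" "z \<in> carrier G"
    and comm: "\<And>x. x \<in> carrier G \<Longrightarrow> y \<otimes> x = x \<otimes> y" "\<And>x. x \<in> carrier G \<Longrightarrow> z \<otimes> x = x \<otimes> z"
    unfolding grp_center_def by auto
  have "y \<otimes> z \<otimes> x = x \<otimes> (y \<otimes> z)" if x: "x \<in> carrier G" for x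
  proof -
    have "y \<otimes> z \<otimes> x = y \<otimes> (x \<otimes> z)" using x yz comm(2) by (simp add: m_assoc)
    also have "\<dots> = x \<otimes> y \<otimes> z" using x yz comm(1) by (simp flip: m_assoc)
    finally show ?thesis using x yz by (simp add: m_assoc)
  qed
  then show "y \<otimes> z \<in> grp_center G" unfolding grp_center_def using yz by simp
  have "inv y \<otimes> x = x \<otimes> inv y" if x: "x \<in> carrier G" for x
  proof -
    have "y \<otimes> (x \<otimes> inv y) = x \<otimes> y \<otimes> inv y" using x yz comm(1) by (simp flip: m_assoc)
    then have "y \<otimes> (x \<otimes> inv y) = x" using x yz by (simp add: m_assoc)
    then show ?thesis using x yz by (simp add: inv_solve_left')
  qed
  then show "inv y \<in> grp_center G" unfolding grp_center_def using yz by simp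
qed (auto simp: grp_center_def)

lemma mult_mem_if_inter_trivial:
  assumes "subgroup K G" "subgroup L G" "K \<inter> L = {\<one>}" "s \<in> K" "t \<in> L"
  shows "s \<otimes> t \<in> L \<Longrightarrow> s = \<one>" and "s \<otimes> t \<in> K \<Longrightarrow> t = \<one>"
proof -
  have st: "s \<in> carrier G" "t \<in> carrier G"
    using subgroup.mem_carrier[OF assms(1,4)] subgroup.mem_carrier[OF assms(2,5)] .
  show "s = \<one>" if "s \<otimes> t \<in> L"
  proof -
    have "s = s \<otimes> t \<otimes> inv t" using st by (simp add: m_assoc)
    also have "\<dots> \<in> L" using that subgroup.m_closed[OF assms(2)] subgroup.m_inv_closed[OF assms(2) assms(5)] by blast
    finally show ?thesis using assms(3,4) by blast
  qed
  show "t = \<one>" if "s \<otimes> t \<in> K"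
  proof -
    have "t = inv s \<otimes> (s \<otimes> t)" using st by (simp add: m_assoc[symmetric])
    also have "\<dots> \<in> K" using that subgroup.m_closed[OF assms(1)] subgroup.m_inv_closed[OF assms(1) assms(4)] by blast
    finally show ?thesis using assms(3,5) by blast
  qed
qed

section \<open>The difference graph\<close>

lemma diff_edge_iff:
  "diff_edge G x y \<longleftrightarrow>
     x \<in> carrier G \<and> y \<in> carrier G \<and> cyc x \<inter> cyc y \<noteq> {\<one>} \<and> x \<notin> cyc y \<and> y \<notin> cyc x"
proof
  assume e: "diff_edge G x y"
  then have xy: "x \<in> carrier G" "y \<in> carrier G" "x \<noteq> y"
    unfolding diff_edge_def ipg_edge_def by auto
  then have "x \<notin> cyc y" "y \<notin> cyc x"
    using e unfolding diff_edge_def pg_edge_def by (auto simp: cyc_iff_int_pow)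
  moreover from this have "x \<noteq> \<one>" "y \<noteq> \<one>" using one_in_cyc by auto
  ultimately show "x \<in> carrier G \<and> y \<in> carrier G \<and> cyc x \<inter> cyc y \<noteq> {\<one>} \<and> x \<notin> cyc y \<and> y \<notin> cyc x"
    using e xy unfolding diff_edge_def ipg_edge_def by auto
next
  assume "x \<in> carrier G \<and> y \<in> carrier G \<and> cyc x \<inter> cyc y \<noteq> {\<one>} \<and> x \<notin> cyc y \<and> y \<notin> cyc x"
  moreover from this have "x \<noteq> y" using self_in_cyc by auto
  ultimately show "diff_edge G x y"
    unfolding diff_edge_def ipg_edge_def pg_edge_def by (auto simp: cyc_iff_int_pow)
qed

lemma diff_edge_sym: "diff_edge G x y \<Longrightarrow> diff_edge G y x"
  unfolding diff_edge_iff by auto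

lemma mem_diff_vertices_iff: "x \<in> diff_vertices G \<longleftrightarrow> (\<exists>y. diff_edge G x y)"
  unfolding diff_vertices_def diff_edge_iff by auto

lemma diff_vertex_obtains_prime_ord:
  assumes "finite (carrier G)" "x \<in> diff_vertices G"
  obtains u where "u \<in> cyc x" "prime (ord u)" "x \<notin> cyc u"
proof -
  obtain y where e: "diff_edge G x y" using assms(2) mem_diff_vertices_iff by blast
  then have x: "x \<in> carrier G" "x \<noteq> \<one>" and y: "y \<in> carrier G" "x \<notin> cyc y"
    and "cyc x \<inter> cyc y \<noteq> {\<one>}" unfolding diff_edge_iff using one_in_cyc by auto
  then obtain z where z: "z \<in> cyc x" "z \<in> cyc y" "z \<noteq> \<one>" using one_in_cyc by blast
  obtain u where u: "u \<in> cyc x" "prime (ord u)" using exists_prime_ord_in_cyc[OF assms(1) x] by blast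
  have "x \<notin> cyc u"
  proof
    assume xu: "x \<in> cyc u"
    have uc: "u \<in> carrier G" using u(1) cyc_subset_carrier[OF x(1)] by blast
    then have "u [^] int (ord u) = \<one>" by (simp add: int_pow_int)
    then have "x [^] int (ord u) = \<one>" using pow_eq_one_if_in_cyc[OF uc _ xu] by blast
    moreover obtain k :: int where "z = x [^] k" using z(1) cyc_iff_int_pow x(1) by blast
    ultimately have "x \<in> cyc z" using in_cyc_int_pow_prime[OF x(1) u(2)] z(3) by simp
    then show False using cyc_mono[OF y(1) z(2)] y(2) by blast
  qed
  then show thesis using that u by blast
qed

lemma diff_vertices_empty_if_order_prime_prime:
  assumes "order G = r * s" "prime r" "prime s"
  shows "diff_vertices G = {}"
proof -
  have "\<not> diff_edge G x y" for x y
  proof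
    assume "diff_edge G x y"
    then have xy: "x \<in> carrier G" "y \<in> carrier G" "cyc x \<inter> cyc y \<noteq> {\<one>}" "x \<notin> cyc y" "y \<notin> cyc x"
      unfolding diff_edge_iff by auto
    have "cyc x \<subseteq> cyc y \<or> cyc y \<subseteq> cyc x"
      using subgroups_nested_in_prime_prime_card[OF subgroup_self _ assms(2,3)
          cyc_subgroup[OF xy(1)] cyc_subset_carrier[OF xy(1)]
          cyc_subgroup[OF xy(2)] cyc_subset_carrier[OF xy(2)] xy(3)] assms(1)
      unfolding order_def by blast
    then show False using xy self_in_cyc by blast
  qed
  then show ?thesis using mem_diff_vertices_iff by blast
qed

lemma iso_integer_mod_group_ord:
  assumes "finite (carrier G)" "x \<in> carrier G" "carrier G = cyc x"
  shows "G \<cong> integer_mod_group (ord x)"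
proof -
  let ?n = "ord x"
  have n: "?n \<noteq> 0" using ord_ge_1[OF assms(1,2)] by simp
  have carrier_Z: "carrier (integer_mod_group ?n) = {0..<int ?n}"
    using n by (simp add: carrier_integer_mod_group)
  have pow_mod: "x [^] (k mod int ?n) = x [^] k" for k :: int
    using int_pow_eq[OF assms(2)] by (simp add: minus_mod_eq_mult_div)
  have "(\<lambda>k. x [^] k) \<in> hom (integer_mod_group ?n) G"
    by (rule homI) (use assms(2) pow_mod in \<open>simp_all add: int_pow_mult\<close>)
  moreover have "inj_on (\<lambda>k. x [^] k) {0..<int ?n}"
    by (rule inj_onI) (simp add: int_pow_eq[OF assms(2)] mod_eq_dvd_iff[symmetric])
  moreover have "(\<lambda>k. x [^] k) ` {0..<int ?n} = carrier G"
  proof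
    show "carrier G \<subseteq> (\<lambda>k. x [^] k) ` {0..<int ?n}"
    proof
      fix g assume "g \<in> carrier G"
      then obtain k :: int where "g = x [^] k" using assms(2,3) cyc_iff_int_pow by blast
      then show "g \<in> (\<lambda>k. x [^] k) ` {0..<int ?n}"
        using pow_mod[of k] n by (auto intro!: image_eqI[of _ _ "k mod int ?n"])
    qed
  qed (use assms(2) in auto)
  ultimately have "(\<lambda>k. x [^] k) \<in> iso (integer_mod_group ?n) G"
    unfolding iso_def bij_betw_def using carrier_Z by simp
  then show ?thesis using group.iso_sym[OF group_integer_mod_group] is_isoI by blast
qed

lemma mem_subgroup_if_coprime_int_pows:
  assumes "subgroup S G" "y \<in> carrier G" "coprime m n" "y [^] (m::int) \<in> S" "y [^] (n::int) \<in> S"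
  shows "y \<in> S"
proof -
  obtain u v :: int where uv: "u * m + v * n = 1"
    using bezout_int assms(3) by (metis coprime_iff_gcd_eq_1)
  have "y = y [^] (m * u + n * v)" using uv assms(2) by (simp add: mult.commute)
  also have "\<dots> = (y [^] m) [^] u \<otimes> (y [^] n) [^] v" using assms(2) by (simp add: int_pow_mult int_pow_pow)
  finally show ?thesis
    using subgroup_int_pow_closed[OF assms(1) assms(4)] subgroup_int_pow_closed[OF assms(1) assms(5)]
      subgroup.m_closed[OF assms(1)] by metis
qed

lemma exists_int_pow_separating:
  assumes fin: "finite (carrier G)" and y: "y \<in> carrier G" "a \<in> cyc y" "b \<in> cyc y"
    and ab: "ord a = p" "ord b = q" "prime p" "prime q" "p \<noteq> q"
    and S: "subgroup S G" "y \<notin> S"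
  shows "\<exists>w \<in> cyc y. w \<notin> S \<and> (a \<in> cyc w) \<noteq> (b \<in> cyc w)"
proof -
  have a: "a \<in> carrier G" "a \<noteq> \<one>" "a [^] int p = \<one>"
    using y(2) cyc_subset_carrier[OF y(1)] ab(1,3) int_pow_eq_id by auto
  have b: "b \<in> carrier G" "b \<noteq> \<one>" "b [^] int q = \<one>"
    using y(3) cyc_subset_carrier[OF y(1)] ab(2,4) int_pow_eq_id by auto
  have "ord y \<noteq> 0" using ord_ge_1[OF fin y(1)] by simp
  moreover have "\<not> is_unit p" using ab(3) not_prime_unit by blast
  ultimately obtain n where n: "ord y = p ^ multiplicity p (ord y) * n" "\<not> p dvd n"
    by (rule multiplicity_decompose')
  define m where "m = p ^ multiplicity p (ord y)"
  (* y^n is the p-part and y^m the p'-part of y; the first contains a but not b, the second b but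
     not a, and y is generated by the two, so one of them lies outside S *)
  have y_mn: "y [^] (int m * int n) = \<one>"
    using int_pow_eq_id[OF y(1)] n(1) unfolding m_def by (metis dvd_refl of_nat_mult)
  have cop_n_p: "coprime (int n) (int p)"
    using prime_imp_coprime[OF ab(3) n(2)] by (simp add: coprime_commute)
  have cop_m_q: "coprime (int m) (int q)"
    using primes_coprime[OF ab(3,4,5)] unfolding m_def by simp
  have "a \<in> cyc (y [^] int n)" using in_cyc_int_pow_coprime[OF y(1,2) a(3) cop_n_p] .
  moreover have "(y [^] int n) [^] int m = \<one>" using y_mn y(1) by (simp add: int_pow_pow mult.commute)
  then have "b \<notin> cyc (y [^] int n)" using not_in_cyc_if_coprime[OF _ b(1,2) _ b(3) cop_m_q] y(1) by simp
  moreover have "b \<in> cyc (y [^] int m)" using in_cyc_int_pow_coprime[OF y(1,3) b(3) cop_m_q] .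
  moreover have "(y [^] int m) [^] int n = \<one>" using y_mn y(1) by (simp add: int_pow_pow)
  then have "a \<notin> cyc (y [^] int m)" using not_in_cyc_if_coprime[OF _ a(1,2) _ a(3) cop_n_p] y(1) by simp
  moreover have "y [^] int n \<notin> S \<or> y [^] int m \<notin> S"
    using mem_subgroup_if_coprime_int_pows[OF S(1) y(1), of "int n" "int m"] S(2) cop_n_p
    unfolding m_def by (auto simp: coprime_commute)
  ultimately show ?thesis using int_pow_in_cyc[OF y(1)] by blast
qed

end

section \<open>Two central elements of distinct prime orders\<close>

locale central_prime_pair = group +
  fixes p q :: nat and a b :: 'a
  assumes finite_carrier: "finite (carrier G)"
    and prime_p: "prime p" and prime_q: "prime q" and p_neq_q: "p \<noteq> q"
    and a_central: "a \<in> grp_center G" and b_central: "b \<in> grp_center G"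
    and ord_a: "ord a = p" and ord_b: "ord b = q"
begin

abbreviation h :: 'a where "h \<equiv> a \<otimes> b"

lemma central_prime_pair_swap: "central_prime_pair G q p b a"
  by unfold_locales (use finite_carrier prime_p prime_q p_neq_q a_central b_central ord_a ord_b in auto)

lemma a_carrier: "a \<in> carrier G" and b_carrier: "b \<in> carrier G"
  using a_central b_central unfolding grp_center_def by auto

lemma a_commute: "x \<in> carrier G \<Longrightarrow> a \<otimes> x = x \<otimes> a"
  using a_central unfolding grp_center_def by auto

lemma a_neq_one: "a \<noteq> \<one>" and b_neq_one: "b \<noteq> \<one>"
  using ord_a ord_b prime_p prime_q by auto

lemma a_pow_p: "a [^] int p = \<one>" and b_pow_q: "b [^] int q = \<one>"
  using int_pow_eq_id a_carrier b_carrier ord_a ord_b by auto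

lemma coprime_p_q: "coprime (int p) (int q)"
  using primes_coprime[OF prime_p prime_q p_neq_q] by simp

lemma h_carrier: "h \<in> carrier G"
  using a_carrier b_carrier by simp

lemma h_int_pow: "h [^] (k::int) = a [^] k \<otimes> b [^] k"
  using int_pow_mult_distrib[OF a_commute[OF b_carrier] a_carrier b_carrier] .

lemma a_in_cyc_h: "a \<in> cyc h" and b_in_cyc_h: "b \<in> cyc h"
  using in_cyc_mult_commute_coprime[OF a_carrier b_carrier a_commute[OF b_carrier]
      a_pow_p b_pow_q coprime_p_q] by auto

lemma b_notin_cyc_a: "b \<notin> cyc a"
  using not_in_cyc_if_coprime[OF a_carrier b_carrier b_neq_one a_pow_p b_pow_q coprime_p_q] .

lemma ord_h: "ord h = p * q"
proof (rule dvd_antisym)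
  show "ord h dvd p * q"
    using ord_mul_divides[OF a_commute[OF b_carrier] a_carrier b_carrier] ord_a ord_b by simp
  have "h [^] int (ord h) = \<one>" using h_carrier by (simp add: int_pow_int)
  then have "a [^] int (ord h) = \<one>" "b [^] int (ord h) = \<one>"
    using pow_eq_one_if_in_cyc[OF h_carrier] a_in_cyc_h b_in_cyc_h by auto
  then have "p dvd ord h" "q dvd ord h"
    using int_pow_eq_id a_carrier b_carrier ord_a ord_b by auto
  then show "p * q dvd ord h"
    using divides_mult primes_coprime[OF prime_p prime_q p_neq_q] by blast
qed

lemma card_cyc_h: "card (cyc h) = p * q"
  using generate_pow_card[OF h_carrier] ord_h by simp

lemma a_or_b_in_cyc_if_in_cyc_h:
  assumes "z \<in> cyc h" "z \<noteq> \<one>"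
  shows "a \<in> cyc z \<or> b \<in> cyc z"
proof -
  obtain k :: int where k: "z = h [^] k" using assms(1) cyc_iff_int_pow h_carrier by blast
  have z: "z \<in> carrier G" using k h_carrier by simp
  have "b [^] (int q * k) = \<one>" "a [^] (int p * k) = \<one>"
    using a_pow_p b_pow_q a_carrier b_carrier by (simp_all flip: int_pow_pow)
  moreover have "z [^] j = a [^] (k * j) \<otimes> b [^] (k * j)" for j :: int
    unfolding k using h_carrier by (simp add: int_pow_pow flip: h_int_pow)
  ultimately have zq: "z [^] int q = a [^] (k * int q)" and zp: "z [^] int p = b [^] (k * int p)"
    using a_carrier b_carrier by (simp_all add: mult.commute)
  have sub: "cyc (z [^] j) \<subseteq> cyc z" for j :: int
    using cyc_mono[OF z int_pow_in_cyc[OF z]] .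
  consider "z [^] int q \<noteq> \<one>" | "z [^] int p \<noteq> \<one>"
    using pow_eq_one_coprime[OF z _ _ coprime_p_q] assms(2) by blast
  then show ?thesis
  proof cases
    case 1
    then have "a \<in> cyc (z [^] int q)" using in_cyc_int_pow_prime[OF a_carrier prime_p a_pow_p] zq by simp
    then show ?thesis using sub by blast
  next
    case 2
    then have "b \<in> cyc (z [^] int p)" using in_cyc_int_pow_prime[OF b_carrier prime_q b_pow_q] zp by simp
    then show ?thesis using sub by blast
  qed
qed

lemma cyc_meets_cyc_h_iff:
  assumes "x \<in> carrier G"
  shows "cyc x \<inter> cyc h \<noteq> {\<one>} \<longleftrightarrow> a \<in> cyc x \<or> b \<in> cyc x"
proof
  assume "cyc x \<inter> cyc h \<noteq> {\<one>}"
  then obtain z where "z \<in> cyc x" "z \<in> cyc h" "z \<noteq> \<one>" using one_in_cyc by blast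
  then show "a \<in> cyc x \<or> b \<in> cyc x"
    using a_or_b_in_cyc_if_in_cyc_h cyc_mono[OF assms] by blast
qed (use a_in_cyc_h b_in_cyc_h a_neq_one b_neq_one in auto)

lemma h_in_cyc_iff:
  assumes "w \<in> carrier G"
  shows "h \<in> cyc w \<longleftrightarrow> a \<in> cyc w \<and> b \<in> cyc w"
  using cyc_mono[OF assms] a_in_cyc_h b_in_cyc_h subgroup.m_closed[OF cyc_subgroup[OF assms]] by auto

lemma diff_edge_h_iff:
  assumes "w \<in> carrier G" "w \<notin> cyc h"
  shows "diff_edge G w h \<longleftrightarrow> (a \<in> cyc w) \<noteq> (b \<in> cyc w)"
  unfolding diff_edge_iff using assms h_carrier cyc_meets_cyc_h_iff h_in_cyc_iff by auto

lemma in_cyc_mult_a: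
  assumes "u \<in> carrier G" "prime (ord u)" "ord u \<noteq> p"
  shows "u \<in> cyc (u \<otimes> a)" "a \<in> cyc (u \<otimes> a)"
proof -
  have "u [^] int (ord u) = \<one>" using assms(1) by (simp add: int_pow_int)
  moreover have "coprime (int (ord u)) (int p)" using primes_coprime[OF assms(2) prime_p assms(3)] by simp
  ultimately show "u \<in> cyc (u \<otimes> a)" "a \<in> cyc (u \<otimes> a)"
    using in_cyc_mult_commute_coprime[OF assms(1) a_carrier a_commute[OF assms(1), symmetric] _ a_pow_p]
    by auto
qed

lemma mem_cyc_mult_a:
  assumes "u \<in> carrier G" "y \<in> cyc (u \<otimes> a)"
  shows "\<exists>k::int. u [^] k \<otimes> a [^] k = y"
proof -
  have "\<exists>k::int. y = (u \<otimes> a) [^] k" using assms a_carrier cyc_iff_int_pow by simp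
  then show ?thesis
    using int_pow_mult_distrib[OF a_commute[OF assms(1), symmetric] assms(1) a_carrier] by metis
qed

lemma diff_edges_via_mult_a:
  assumes x: "x \<in> carrier G" "a \<notin> cyc x" "b \<notin> cyc x"
    and u: "u \<in> cyc x" "prime (ord u)" "ord u \<noteq> p"
  shows "diff_edge G (u \<otimes> a) h" and "x \<notin> cyc u \<Longrightarrow> diff_edge G x (u \<otimes> a)"
proof -
  let ?w = "u \<otimes> a"
  have uc: "u \<in> carrier G" using u(1) cyc_subset_carrier[OF x(1)] by blast
  have wc: "?w \<in> carrier G" using uc a_carrier by simp
  have u1: "u \<noteq> \<one>" using u(2) by auto
  note in_w = in_cyc_mult_a[OF uc u(2,3)]
  have trivial: "cyc x \<inter> cyc h = {\<one>}"
    using cyc_meets_cyc_h_iff[OF x(1)] x(2,3) by simp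
  have "u [^] k \<otimes> a [^] k \<in> cyc h \<Longrightarrow> u [^] k = \<one>" "u [^] k \<otimes> a [^] k \<in> cyc x \<Longrightarrow> a [^] k = \<one>"
    for k :: int
    using mult_mem_if_inter_trivial[OF cyc_subgroup[OF x(1)] cyc_subgroup[OF h_carrier] trivial]
      cyc_mono[OF x(1) u(1)] int_pow_in_cyc[OF uc] cyc_mono[OF h_carrier a_in_cyc_h] int_pow_in_cyc[OF a_carrier]
    by blast+
  note factors_trivial = this
  have "u \<notin> cyc h" using trivial u(1) u1 by (auto simp: set_eq_iff)
  then have w_notin: "?w \<notin> cyc h" using in_w(1) cyc_mono[OF h_carrier] by blast
  have "b \<notin> cyc ?w"
  proof
    assume "b \<in> cyc ?w"
    then obtain k :: int where k: "u [^] k \<otimes> a [^] k = b" using mem_cyc_mult_a[OF uc] by blast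
    then have "u [^] k = \<one>" using factors_trivial(1)[of k] b_in_cyc_h by simp
    then have "b = a [^] k" using k a_carrier by simp
    then show False using b_notin_cyc_a int_pow_in_cyc[OF a_carrier] by simp
  qed
  then show "diff_edge G ?w h" using diff_edge_h_iff[OF wc w_notin] in_w(2) by simp
  show "diff_edge G x ?w" if xu: "x \<notin> cyc u"
  proof -
    have "x \<notin> cyc ?w"
    proof
      assume "x \<in> cyc ?w"
      then obtain k :: int where k: "u [^] k \<otimes> a [^] k = x" using mem_cyc_mult_a[OF uc] by blast
      then have "a [^] k = \<one>" using factors_trivial(2)[of k] self_in_cyc[OF x(1)] by simp
      then have "x = u [^] k" using k uc by simp
      then show False using xu int_pow_in_cyc[OF uc] by simp
    qed
    moreover have "?w \<notin> cyc x" using in_w(2) x(2) cyc_mono[OF x(1)] by blast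
    moreover have "cyc x \<inter> cyc ?w \<noteq> {\<one>}" using u(1) in_w(1) u1 by blast
    ultimately show ?thesis unfolding diff_edge_iff using x(1) wc by blast
  qed
qed

lemma exists_diff_edges_via_central:
  assumes x: "x \<in> carrier G" "a \<notin> cyc x" "b \<notin> cyc x"
    and u: "u \<in> cyc x" "prime (ord u)"
  obtains w where "diff_edge G w h" and "x \<notin> cyc u \<Longrightarrow> diff_edge G x w"
proof (cases "ord u = p")
  case False
  then show thesis using diff_edges_via_mult_a[OF x u] that by blast
next
  case True
  interpret swapped: central_prime_pair G q p b a by (rule central_prime_pair_swap)
  have "b \<otimes> a = h" using a_commute[OF b_carrier] by simp
  then show thesis
    using swapped.diff_edges_via_mult_a[OF x(1,3,2) u] True p_neq_q that by auto
qed

lemma two_steps_to_h_if_avoiding: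
  assumes x: "x \<in> diff_vertices G" "a \<notin> cyc x" "b \<notin> cyc x"
  shows "\<exists>w. diff_edge G x w \<and> diff_edge G w h"
proof -
  obtain u where u: "u \<in> cyc x" "prime (ord u)" "x \<notin> cyc u"
    using diff_vertex_obtains_prime_ord[OF finite_carrier x(1)] by blast
  have "x \<in> carrier G" using x(1) unfolding diff_vertices_def by blast
  then show ?thesis using exists_diff_edges_via_central[OF _ x(2,3) u(1,2)] u(3) by metis
qed

lemma exists_diff_edge_h_outside:
  assumes y: "y \<in> carrier G" "a \<in> cyc y \<or> b \<in> cyc y"
    and S: "subgroup S G" "cyc h \<subseteq> S" "y \<notin> S"
  shows "\<exists>w \<in> cyc y. w \<notin> S \<and> diff_edge G w h"
proof (cases "h \<in> cyc y")
  case False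
  then have "diff_edge G y h" using diff_edge_h_iff[OF y(1)] y(2) S(2,3) h_in_cyc_iff[OF y(1)] by auto
  then show ?thesis using self_in_cyc[OF y(1)] S(3) by blast
next
  case True
  then obtain w where w: "w \<in> cyc y" "w \<notin> S" "(a \<in> cyc w) \<noteq> (b \<in> cyc w)"
    using exists_int_pow_separating[OF finite_carrier y(1) _ _ ord_a ord_b prime_p prime_q p_neq_q S(1,3)]
      h_in_cyc_iff[OF y(1)] by blast
  moreover have "w \<in> carrier G" using w(1) cyc_subset_carrier[OF y(1)] by blast
  ultimately show ?thesis using diff_edge_h_iff S(2) by blast
qed

lemma diff_edge_h_if_neighbour_in_cyc_h:
  assumes "x \<in> cyc h" "diff_edge G x y"
  shows "diff_edge G y h"
proof -
  have x: "x \<in> carrier G" "cyc x \<subseteq> cyc h"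
    using assms(1) cyc_subset_carrier[OF h_carrier] cyc_mono[OF h_carrier] by auto
  have y: "y \<in> carrier G" "cyc x \<inter> cyc y \<noteq> {\<one>}" "x \<notin> cyc y" "y \<notin> cyc x"
    using assms(2) unfolding diff_edge_iff by auto
  have "y \<notin> cyc h"
  proof
    assume "y \<in> cyc h"
    then have "cyc x \<subseteq> cyc y \<or> cyc y \<subseteq> cyc x"
      using subgroups_nested_in_prime_prime_card[OF cyc_subgroup[OF h_carrier] card_cyc_h prime_p prime_q
          cyc_subgroup[OF x(1)] x(2) cyc_subgroup[OF y(1)] cyc_mono[OF h_carrier] y(2)] by blast
    then show False using y(3,4) self_in_cyc x(1) y(1) by blast
  qed
  moreover have "h \<notin> cyc y" using cyc_mono[OF y(1)] assms(1) y(3) by blast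
  moreover have "cyc y \<inter> cyc h \<noteq> {\<one>}" using y(2) x(2) one_in_cyc by blast
  ultimately show ?thesis unfolding diff_edge_iff using y(1) h_carrier by blast
qed

lemma two_steps_to_h_via_neighbour:
  assumes x: "x \<in> carrier G" "h \<in> cyc x" and e: "diff_edge G x y" and y: "a \<in> cyc y \<or> b \<in> cyc y"
  shows "\<exists>w. diff_edge G x w \<and> diff_edge G w h"
proof -
  have hx: "cyc h \<subseteq> cyc x" using cyc_mono[OF x] .
  have yc: "y \<in> carrier G" "y \<notin> cyc x" using e unfolding diff_edge_iff by auto
  then obtain w where w: "w \<in> cyc y" "w \<notin> cyc x" "diff_edge G w h"
    using exists_diff_edge_h_outside[OF yc(1) y cyc_subgroup[OF x(1)] hx] by blast
  have wc: "w \<in> carrier G" using w(1) cyc_subset_carrier[OF yc(1)] by blast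
  have one: "(a \<in> cyc w) \<noteq> (b \<in> cyc w)"
    using diff_edge_h_iff[OF wc] w(2,3) hx by blast
  then have "cyc x \<inter> cyc w \<noteq> {\<one>}"
    using hx a_in_cyc_h b_in_cyc_h a_neq_one b_neq_one by blast
  moreover have "x \<notin> cyc w" using cyc_mono[OF wc] hx one a_in_cyc_h b_in_cyc_h by blast
  ultimately have "diff_edge G x w" unfolding diff_edge_iff using x(1) wc w(2) by blast
  then show ?thesis using w(3) by blast
qed

lemma path_to_h_cases:
  assumes x: "x \<in> diff_vertices G"
  obtains "diff_edge G x h"
    | w where "diff_edge G x w" "diff_edge G w h"
    | y w where "diff_edge G x y" "diff_edge G y w" "diff_edge G w h"
proof -
  have xc: "x \<in> carrier G" using x unfolding diff_vertices_def by blast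
  obtain y where e: "diff_edge G x y" using x mem_diff_vertices_iff by blast
  consider "a \<notin> cyc x" "b \<notin> cyc x" | "x \<in> cyc h" | "a \<in> cyc x \<or> b \<in> cyc x" "x \<notin> cyc h" "h \<notin> cyc x"
    | "h \<in> cyc x" "a \<notin> cyc y" "b \<notin> cyc y" | "h \<in> cyc x" "a \<in> cyc y \<or> b \<in> cyc y"
    by blast
  then show thesis
  proof cases
    case 1
    then show thesis using two_steps_to_h_if_avoiding[OF x] that(2) by blast
  next
    case 2
    then show thesis using diff_edge_h_if_neighbour_in_cyc_h[OF _ e] that(2) e by blast
  next
    case 3
    then show thesis using diff_edge_h_iff[OF xc] h_in_cyc_iff[OF xc] that(1) by auto
  next
    case 4
    have "y \<in> diff_vertices G" using e diff_edge_sym mem_diff_vertices_iff by blast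
    then show thesis using two_steps_to_h_if_avoiding 4(2,3) e that(3) by blast
  next
    case 5
    then show thesis using two_steps_to_h_via_neighbour[OF xc _ e] that(2) by blast
  qed
qed

lemma reachable_within_3_h:
  assumes "x \<in> diff_vertices G"
  shows "reachable_within (diff_edge G) 3 x h"
  using assms
proof (cases rule: path_to_h_cases)
  case 1
  then show ?thesis by (simp add: numeral_eq_Suc reachable_within_edge)
next
  case (2 w)
  then show ?thesis by (simp add: numeral_eq_Suc reachable_within_Cons reachable_within_edge)
next
  case (3 y w)
  then show ?thesis
    using reachable_within_Cons[OF 3(1) reachable_within_Cons[OF 3(2)
          reachable_within_edge[of "diff_edge G", OF 3(3)]]]
    by (simp add: numeral_eq_Suc)
qed

lemma diff_graph_diam_le_6: "graph_diam_le (diff_vertices G) (diff_edge G) 6"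
proof -
  have "reachable_within (diff_edge G) (3 + 3) u v" if "u \<in> diff_vertices G" "v \<in> diff_vertices G" for u v
    using reachable_within_trans[OF reachable_within_3_h[OF that(1)]
        reachable_within_sym[OF diff_edge_sym reachable_within_3_h[OF that(2)]]] .
  then show ?thesis unfolding graph_diam_le_iff_reachable_within by simp
qed

lemma h_in_diff_vertices:
  assumes "carrier G \<noteq> cyc h"
  shows "h \<in> diff_vertices G"
proof -
  obtain g where g: "g \<in> carrier G" "g \<notin> cyc h"
    using assms cyc_subset_carrier[OF h_carrier] by blast
  have "\<exists>w. diff_edge G w h"
  proof (cases "a \<in> cyc g \<or> b \<in> cyc g")
    case True
    then show ?thesis
      using exists_diff_edge_h_outside[OF g(1) True cyc_subgroup[OF h_carrier] subset_refl g(2)] by blast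
  next
    case False
    have "g \<noteq> \<one>" using g(2) one_in_cyc by blast
    then obtain u where "u \<in> cyc g" "prime (ord u)"
      using exists_prime_ord_in_cyc[OF finite_carrier g(1)] by blast
    then show ?thesis using exists_diff_edges_via_central[OF g(1)] False by blast
  qed
  then show ?thesis using diff_edge_sym mem_diff_vertices_iff by blast
qed

lemma iso_integer_mod_group_if_carrier_eq_cyc_h:
  assumes "carrier G = cyc h"
  shows "G \<cong> integer_mod_group (p * q)"
  using iso_integer_mod_group_ord[OF finite_carrier h_carrier assms] ord_h by simp

end

lemma order_integer_mod_group: "n \<noteq> 0 \<Longrightarrow> order (integer_mod_group n) = n"
  unfolding order_def by (simp add: carrier_integer_mod_group)

theorem theorem4p1:
  fixes G :: "('a, 'b) monoid_scheme"
  assumes "group G" and "finite (carrier G)"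
    and "\<exists>p q::nat. Factorial_Ring.prime p \<and> Factorial_Ring.prime q \<and> p \<noteq> q \<and>
            p dvd card (grp_center G) \<and> q dvd card (grp_center G)"
  shows "(graph_connected (diff_vertices G) (diff_edge G) \<longleftrightarrow>
            \<not> (\<exists>p q::nat. Factorial_Ring.prime p \<and> Factorial_Ring.prime q \<and> G \<cong> integer_mod_group (p * q)))
         \<and> (graph_connected (diff_vertices G) (diff_edge G) \<longrightarrow>
            graph_diam_le (diff_vertices G) (diff_edge G) 6)"
proof -
  interpret group G by (rule assms(1))
  obtain p q where pq: "prime p" "prime q" "p \<noteq> q" "p dvd card (grp_center G)" "q dvd card (grp_center G)"
    using assms(3) by blast
  obtain a b where "a \<in> grp_center G" "ord a = p" "b \<in> grp_center G" "ord b = q"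
    using exists_ord_prime_in_subgroup[OF assms(2) grp_center_subgroup] pq by metis
  then interpret central_prime_pair G p q a b
    by unfold_locales (use assms(2) pq in auto)
  have "diff_vertices G \<noteq> {} \<longleftrightarrow>
      \<not> (\<exists>r s. prime r \<and> prime s \<and> G \<cong> integer_mod_group (r * s))"
  proof
    assume "diff_vertices G \<noteq> {}"
    then show "\<not> (\<exists>r s. prime r \<and> prime s \<and> G \<cong> integer_mod_group (r * s))"
      using diff_vertices_empty_if_order_prime_prime iso_same_card order_integer_mod_group
      unfolding order_def by (metis mult_is_0 not_prime_0)
  next
    assume "\<not> (\<exists>r s. prime r \<and> prime s \<and> G \<cong> integer_mod_group (r * s))"
    then show "diff_vertices G \<noteq> {}"
      using iso_integer_mod_group_if_carrier_eq_cyc_h h_in_diff_vertices prime_p prime_q by blast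
  qed
  then show ?thesis using graph_connected_iff_nonempty[OF diff_graph_diam_le_6] diff_graph_diam_le_6 by blast
qed

end
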